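(* Let $\mathscr{C}$ be a $(t,1)_q$ generalized convertible code over $\mathbb{F}_q$ with initial codes $\mathcal{C}^{I_1},\dots,\mathcal{C}^{I_t}$ ($\mathcal{C}^{I_i}$ an $[n_{I_i},k_{I_i}]_q$ code) and final code $\mathcal{C}^F$ (an $[n_F,k_F]_q$ code). Assume $\mathcal{C}^F$ has $(r,\delta)$-locality and let $d_F$ be its minimum distance. For $i\in[t]$ let $\Delta_i=|\mathcal{U}_i\setminus\mathcal{R}_i|-d_F+1$. Then for each $i\in[t]$, $$|\mathcal{R}_i|\ge\begin{cases}k_{I_i}, & \text{if } \Delta_i\le 0,\\ k_{I_i}-\Delta_i+(\delta-1)\left\lfloor\frac{\Delta_i}{r+\delta-1}\right\rfloor, & \text{otherwise}.\end{cases}$$ Moreover, if $d_F>n_{I_i}-k_{I_i}+1$ for some $i\in[t]$, then $\Delta_i\le 0$ and hence $|\mathcal{R}_i|\ge k_{I_i}$.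
   Context: All codes are linear over $\mathbb{F}_q$; $[n]=\{1,\dots,n\}$. A $(t,1)_q$ generalized convertible code consists of $t$ initial linear codes $\mathcal{C}^{I_1},\dots,\mathcal{C}^{I_t}$, $\mathcal{C}^{I_i}$ an $[n_{I_i},k_{I_i}]_q$ code, a final linear $[n_F,k_F]_q$ code $\mathcal{C}^F$ with $k_F=\sum_i k_{I_i}$, and a linear bijection $\phi:\mathcal{C}^{I_1}\times\cdots\times\mathcal{C}^{I_t}\to\mathcal{C}^F$, together with: for each $i$, a set $\mathcal{U}_i$ of coordinates of $\mathcal{C}^{I_i}$ (unchanged symbols) with an injective assignment of each $u\in\mathcal{U}_i$ to a coordinate of $\mathcal{C}^F$, images of different pairs $(i,u)$ distinct, such that for all $(c_1,\dots,c_t)$ the coordinate of $\phi(c_1,\dots,c_t)$ assigned to $u$ equals the $u$-th coordinate of $c_i$; the set $\mathcal{W}$ of coordinates of $\mathcal{C}^F$ not assigned to any unchanged symbol (written symbols); and for each $i$ a set $\mathcal{R}_i$ of coordinates of $\mathcal{C}^{I_i}$ (read symbols) such that $\phi(c_1,\dots,c_t)|_{\mathcal{W}}$ is a function of $(c_1|_{\mathcal{R}_1},\dots,c_t|_{\mathcal{R}_t})$. A code $\mathcal{C}\subseteq\mathbb{F}_q^n$ has $(r,\delta)$-locality ($r\ge1,\delta\ge2$) if every coordinate $i$ lies in a subset $J_i\subseteq[n]$ with $|J_i|\le r+\delta-1$ such that $\mathcal{C}|_{J_i}$ has minimum distance at least $\delta$. *)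

theory Defs
  imports Complex_Main
begin

text \<open>Vectors of length n over a field: functions nat => 'a supported on [n] = {1..n}.\<close>
definition vecs :: "nat \<Rightarrow> (nat \<Rightarrow> 'a::zero) set" where
  "vecs n = {c. \<forall>j. j \<notin> {1..n} \<longrightarrow> c j = 0}"

text \<open>An [n,k]_q linear code over the finite field 'a (q = CARD('a)).\<close>
definition linear_code :: "nat \<Rightarrow> nat \<Rightarrow> (nat \<Rightarrow> 'a::{finite,field}) set \<Rightarrow> bool" where
  "linear_code n k C \<longleftrightarrow>
     C \<subseteq> vecs n \<and> (\<lambda>_. 0) \<in> C \<and>
     (\<forall>x\<in>C. \<forall>y\<in>C. (\<lambda>j. x j + y j) \<in> C) \<and>
     (\<forall>a. \<forall>x\<in>C. (\<lambda>j. a * x j) \<in> C) \<and>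
     card C = card (UNIV :: 'a set) ^ k"

definition hamming_dist :: "(nat \<Rightarrow> 'a) \<Rightarrow> (nat \<Rightarrow> 'a) \<Rightarrow> nat" where
  "hamming_dist x y = card {j. x j \<noteq> y j}"

definition min_dist :: "(nat \<Rightarrow> 'a) set \<Rightarrow> nat" where
  "min_dist C = Inf {hamming_dist x y | x y. x \<in> C \<and> y \<in> C \<and> x \<noteq> y}"

text \<open>Restriction (puncturing onto J): coordinates outside J are set to 0.\<close>
definition restrict_code :: "nat set \<Rightarrow> (nat \<Rightarrow> 'a::zero) set \<Rightarrow> (nat \<Rightarrow> 'a) set" where
  "restrict_code J C = (\<lambda>c j. if j \<in> J then c j else 0) ` C"

text \<open>(r,delta)-locality; "C|_J has minimum distance at least delta" means every two
  distinct codewords of C|_J are at distance at least delta.\<close>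
definition has_locality :: "nat \<Rightarrow> nat \<Rightarrow> nat \<Rightarrow> (nat \<Rightarrow> 'a::zero) set \<Rightarrow> bool" where
  "has_locality n r \<delta> C \<longleftrightarrow>
     (\<forall>i\<in>{1..n}. \<exists>J\<subseteq>{1..n}. i \<in> J \<and> card J \<le> r + \<delta> - 1 \<and>
        (\<forall>x\<in>restrict_code J C. \<forall>y\<in>restrict_code J C. x \<noteq> y \<longrightarrow> hamming_dist x y \<ge> \<delta>))"

text \<open>Tuples (c_1,...,c_t) of initial codewords, encoded as functions i => c_i,
  with c_i = 0 for i outside [t].\<close>
definition code_tuples :: "nat \<Rightarrow> (nat \<Rightarrow> (nat \<Rightarrow> 'a::zero) set) \<Rightarrow> (nat \<Rightarrow> nat \<Rightarrow> 'a) set" where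
  "code_tuples t CI = {cs. (\<forall>i\<in>{1..t}. cs i \<in> CI i) \<and> (\<forall>i. i \<notin> {1..t} \<longrightarrow> cs i = (\<lambda>_. 0))}"

definition written :: "nat \<Rightarrow> nat \<Rightarrow> (nat \<Rightarrow> nat set) \<Rightarrow> (nat \<Rightarrow> nat \<Rightarrow> nat) \<Rightarrow> nat set" where
  "written t nF U \<sigma> = {1..nF} - (\<lambda>(i, u). \<sigma> i u) ` (SIGMA i:{1..t}. U i)"

text \<open>A (t,1)_q generalized convertible code with conversion map phi, unchanged symbols U i
  (assigned via sigma i u to final coordinates), and read symbols R i.\<close>
definition gen_convertible_code ::
  "nat \<Rightarrow> (nat \<Rightarrow> nat) \<Rightarrow> (nat \<Rightarrow> nat) \<Rightarrow> (nat \<Rightarrow> (nat \<Rightarrow> 'a::{finite,field}) set) \<Rightarrow>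
   nat \<Rightarrow> nat \<Rightarrow> (nat \<Rightarrow> 'a) set \<Rightarrow> ((nat \<Rightarrow> nat \<Rightarrow> 'a) \<Rightarrow> (nat \<Rightarrow> 'a)) \<Rightarrow>
   (nat \<Rightarrow> nat set) \<Rightarrow> (nat \<Rightarrow> nat \<Rightarrow> nat) \<Rightarrow> (nat \<Rightarrow> nat set) \<Rightarrow> bool" where
  "gen_convertible_code t nI kI CI nF kF CF \<phi> U \<sigma> R \<longleftrightarrow>
     (\<forall>i\<in>{1..t}. linear_code (nI i) (kI i) (CI i)) \<and>
     linear_code nF kF CF \<and>
     kF = (\<Sum>i\<in>{1..t}. kI i) \<and>
     bij_betw \<phi> (code_tuples t CI) CF \<and>
     (\<forall>cs\<in>code_tuples t CI. \<forall>ds\<in>code_tuples t CI.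
        \<phi> (\<lambda>i j. cs i j + ds i j) = (\<lambda>j. \<phi> cs j + \<phi> ds j)) \<and>
     (\<forall>a. \<forall>cs\<in>code_tuples t CI. \<phi> (\<lambda>i j. a * cs i j) = (\<lambda>j. a * \<phi> cs j)) \<and>
     (\<forall>i\<in>{1..t}. U i \<subseteq> {1..nI i} \<and> R i \<subseteq> {1..nI i}) \<and>
     (\<forall>i\<in>{1..t}. \<forall>u\<in>U i. \<sigma> i u \<in> {1..nF}) \<and>
     inj_on (\<lambda>(i, u). \<sigma> i u) (SIGMA i:{1..t}. U i) \<and>
     (\<forall>cs\<in>code_tuples t CI. \<forall>i\<in>{1..t}. \<forall>u\<in>U i. \<phi> cs (\<sigma> i u) = cs i u) \<and>
     (\<forall>cs\<in>code_tuples t CI. \<forall>ds\<in>code_tuples t CI.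
        (\<forall>i\<in>{1..t}. \<forall>j\<in>R i. cs i j = ds i j) \<longrightarrow>
        (\<forall>w\<in>written t nF U \<sigma>. \<phi> cs w = \<phi> ds w))"

end

theory Submission
  imports Defs "HOL-Library.Cardinality"
begin

text \<open>Fix \<open>i\<close> and write \<open>k = k\<^sub>I\<^sub>i\<close>, \<open>R = R\<^sub>i\<close>. Some fibre of the restriction map
  \<open>c \<mapsto> c|\<^sub>R\<close> on \<open>C\<^sup>I\<^sup>i\<close> has at least \<open>q ^ (k - |R|)\<close> codewords. Convert each of them,
  padded with zero codewords of the other initial codes. Written symbols are functions of the read
  symbols, unchanged symbols of the other codes are \<open>0\<close> and read unchanged symbols agree, so the
  images differ only in the \<open>|U\<^sub>i - R|\<close> final coordinates carrying unread unchanged symbols.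
  They form a (nonlinear) subcode of \<open>C\<^sup>F\<close> that varies only there and inherits distance
  \<open>d\<^sub>F\<close> and \<open>(r, \<delta>)\<close>-locality, so a Singleton-type bound for locally recoverable codes
  gives \<open>L (\<delta> - 1) + (k - |R|) \<le> \<Delta>\<^sub>i\<close> whenever \<open>L r < k - |R|\<close>; take \<open>L = 0\<close> and
  \<open>L = \<lfloor>\<Delta>\<^sub>i / (r + \<delta> - 1)\<rfloor>\<close>.

  The Singleton-type bound for a set \<open>V\<close> of vectors varying only on \<open>S\<close> is proved greedily,
  tracking the number \<open>N(X)\<close> of distinct restrictions of \<open>V\<close> to a set \<open>X \<subseteq> S\<close>. While \<open>X\<close>
  does not separate \<open>V\<close>, some local group meets \<open>S - X\<close> in at least \<open>\<delta>\<close> coordinates, \<open>\<delta> - 1\<close>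
  of which are redundant; so \<open>L\<close> groups give \<open>X\<close> with \<open>N(X) \<le> q ^ (L r)\<close> and
  \<open>q ^ (L (\<delta> - 1)) N(X) \<le> q ^ |X|\<close>. Single coordinates are then added while
  \<open>N(X) \<le> q ^ (m - 1) < |V|\<close>; in the end \<open>|X| \<ge> L (\<delta> - 1) + m - 1\<close>, and as \<open>X\<close> still does
  not separate \<open>V\<close>, the distance leaves \<open>d\<close> coordinates of \<open>S\<close> outside \<open>X\<close>.\<close>

definition restrict_vec :: "nat set \<Rightarrow> (nat \<Rightarrow> 'a::zero) \<Rightarrow> nat \<Rightarrow> 'a" where
  "restrict_vec J c = (\<lambda>j. if j \<in> J then c j else 0)"

lemma restrict_code_eq_image: "restrict_code J C = restrict_vec J ` C"
  by (simp add: restrict_code_def restrict_vec_def)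

lemma restrict_vec_eq_iff: "restrict_vec X v = restrict_vec X w \<longleftrightarrow> (\<forall>j\<in>X. v j = w j)"
  by (auto simp: restrict_vec_def fun_eq_iff)

lemma restrict_vec_restrict_vec: "Z \<subseteq> Y \<Longrightarrow> restrict_vec Z (restrict_vec Y v) = restrict_vec Z v"
  by (auto simp: restrict_vec_def fun_eq_iff)

lemma restrict_vec_insert: "restrict_vec (insert j X) v = (restrict_vec X v)(j := v j)"
  by (auto simp: restrict_vec_def)

lemma card_restrict_code_empty: "V \<noteq> {} \<Longrightarrow> card (restrict_code {} V) = 1"
  by (simp add: restrict_code_def image_constant_conv)

lemma card_restrict_code_insert:
  fixes V :: "(nat \<Rightarrow> 'a::{finite,zero}) set"
  assumes "finite V"
  shows "card (restrict_code (insert j X) V) \<le> CARD('a) * card (restrict_code X V)"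
proof -
  let ?P = "restrict_code X V \<times> (UNIV :: 'a set)"
  have "finite ?P"
    using assms by (simp add: restrict_code_def)
  have "restrict_code (insert j X) V \<subseteq> (\<lambda>(p, a). p(j := a)) ` ?P"
    by (auto simp: restrict_code_eq_image restrict_vec_insert)
  then have "card (restrict_code (insert j X) V) \<le> card ((\<lambda>(p, a). p(j := a)) ` ?P)"
    by (rule card_mono[rotated]) (simp add: \<open>finite ?P\<close>)
  also have "\<dots> \<le> card ?P"
    using \<open>finite ?P\<close> by (rule card_image_le)
  finally show ?thesis
    by (simp add: card_cartesian_product mult.commute)
qed

lemma card_restrict_code_union:
  fixes V :: "(nat \<Rightarrow> 'a::{finite,zero}) set"
  assumes "finite V" "finite F"
  shows "card (restrict_code (X \<union> F) V) \<le> CARD('a) ^ card F * card (restrict_code X V)"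
  using assms(2)
proof (induction F rule: finite_induct)
  case empty
  then show ?case by simp
next
  case (insert j F)
  have "card (restrict_code (X \<union> insert j F) V) \<le> CARD('a) * card (restrict_code (X \<union> F) V)"
    using card_restrict_code_insert[OF assms(1)] by simp
  also have "\<dots> \<le> CARD('a) * (CARD('a) ^ card F * card (restrict_code X V))"
    using insert.IH by simp
  finally show ?case
    using insert.hyps by (simp add: mult.assoc)
qed

lemma card_restrict_code_le_if_determined:
  assumes "Z \<subseteq> Y" "finite V"
    and determined: "\<And>v w. v \<in> V \<Longrightarrow> w \<in> V \<Longrightarrow>
      restrict_vec Z v = restrict_vec Z w \<Longrightarrow> restrict_vec Y v = restrict_vec Y w"
  shows "card (restrict_code Y V) \<le> card (restrict_code Z V)"
  unfolding restrict_code_eq_image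
proof (rule card_inj_on_le)
  show "inj_on (restrict_vec Z) (restrict_vec Y ` V)"
  proof (rule inj_onI)
    fix p p' assume "p \<in> restrict_vec Y ` V" "p' \<in> restrict_vec Y ` V"
      and eq: "restrict_vec Z p = restrict_vec Z p'"
    then obtain v w where "v \<in> V" "w \<in> V" "p = restrict_vec Y v" "p' = restrict_vec Y w"
      by blast
    moreover have "restrict_vec Z v = restrict_vec Z w"
      using eq calculation(3,4) by (simp add: restrict_vec_restrict_vec[OF assms(1)])
    ultimately show "p = p'"
      using determined by blast
  qed
  show "restrict_vec Z ` restrict_vec Y ` V \<subseteq> restrict_vec Z ` V"
    by (simp add: image_image restrict_vec_restrict_vec[OF assms(1)])
  show "finite (restrict_vec Z ` V)"
    using assms(2) by simp
qed

lemma card_UNIV_gt_1: "1 < CARD('a::{finite,zero_neq_one})"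
proof -
  have "card {0::'a, 1} \<le> CARD('a)"
    by (rule card_mono) auto
  then show ?thesis
    by simp
qed

text \<open>Unlike \<open>d \<le> min_dist C\<close> it holds for every
  \<open>C\<close> with fewer than two elements, whose \<open>min_dist\<close> is \<open>Inf {} = 0\<close>.\<close>

definition pairwise_dist_ge :: "nat \<Rightarrow> (nat \<Rightarrow> 'a) set \<Rightarrow> bool" where
  "pairwise_dist_ge d C \<longleftrightarrow> (\<forall>x\<in>C. \<forall>y\<in>C. x \<noteq> y \<longrightarrow> d \<le> hamming_dist x y)"

lemma pairwise_dist_ge_subset: "pairwise_dist_ge d C \<Longrightarrow> D \<subseteq> C \<Longrightarrow> pairwise_dist_ge d D"
  unfolding pairwise_dist_ge_def by blast

lemma pairwise_dist_ge_min_dist: "pairwise_dist_ge (min_dist C) C"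
  unfolding pairwise_dist_ge_def
proof (intro ballI impI)
  fix x y assume "x \<in> C" "y \<in> C" "x \<noteq> y"
  show "min_dist C \<le> hamming_dist x y"
    unfolding min_dist_def by (rule cInf_lower) (use \<open>x \<in> C\<close> \<open>y \<in> C\<close> \<open>x \<noteq> y\<close> in auto)
qed

lemma has_locality_local_group:
  assumes "has_locality n r \<delta> C" "j \<in> {1..n}"
  obtains J where "J \<subseteq> {1..n}" "j \<in> J" "card J \<le> r + \<delta> - 1"
    "pairwise_dist_ge \<delta> (restrict_code J C)"
  using assms(1)[unfolded has_locality_def pairwise_dist_ge_def[symmetric]] assms(2) that by blast

lemma exists_large_fiber:
  assumes "finite C" "C \<noteq> {}"
  obtains p where "card C \<le> card (f ` C) * card {c\<in>C. f c = p}"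
proof -
  let ?fiber = "\<lambda>p. card {c\<in>C. f c = p}"
  have "finite (?fiber ` f ` C)"
    using assms(1) by simp
  moreover have "Max (?fiber ` f ` C) \<in> ?fiber ` f ` C"
    using \<open>finite (?fiber ` f ` C)\<close> assms(2) by (intro Max_in) auto
  then obtain p where p: "Max (?fiber ` f ` C) = ?fiber p" "p \<in> f ` C"
    by (rule imageE)
  ultimately have max: "?fiber p' \<le> ?fiber p" if "p' \<in> f ` C" for p'
    using that unfolding p(1)[symmetric] by simp
  have "C = (\<Union>p\<in>f ` C. {c\<in>C. f c = p})"
    by blast
  then have "card C = card (\<Union>p\<in>f ` C. {c\<in>C. f c = p})"
    by simp
  also have "\<dots> \<le> (\<Sum>p'\<in>f ` C. ?fiber p')"
    using assms(1) by (intro card_UN_le) simp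
  also have "\<dots> \<le> card (f ` C) * ?fiber p"
    using sum_bounded_above[of "f ` C" ?fiber "?fiber p"] max by simp
  finally show ?thesis
    by (rule that)
qed

lemma large_fiber_of_restriction:
  fixes C :: "(nat \<Rightarrow> 'a::{finite,zero}) set"
  assumes "finite C" "C \<noteq> {}" "finite R"
  obtains F p where "F \<subseteq> C" "\<forall>c\<in>F. restrict_vec R c = p" "card C \<le> CARD('a) ^ card R * card F"
proof -
  obtain p where p: "card C \<le> card (restrict_vec R ` C) * card {c\<in>C. restrict_vec R c = p}"
    using exists_large_fiber[OF assms(1,2)] .
  have "card (restrict_vec R ` C) \<le> CARD('a) ^ card R"
    using card_restrict_code_union[OF assms(1,3), of "{}"] card_restrict_code_empty[OF assms(2)]
    by (simp add: restrict_code_eq_image)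
  then have "card C \<le> CARD('a) ^ card R * card {c\<in>C. restrict_vec R c = p}"
    using p by (meson le_trans mult_le_mono1)
  then show ?thesis
    by (intro that[of "{c\<in>C. restrict_vec R c = p}" p]) auto
qed

locale lrc_set =
  fixes V :: "(nat \<Rightarrow> 'a::{finite,zero_neq_one}) set" and S :: "nat set" and d r \<delta> :: nat
  assumes finite_V: "finite V" and V_nonempty: "V \<noteq> {}" and finite_S: "finite S"
    and agree_outside: "\<And>v w j. v \<in> V \<Longrightarrow> w \<in> V \<Longrightarrow> j \<notin> S \<Longrightarrow> v j = w j"
    and distance: "pairwise_dist_ge d V"
    and local_group: "\<And>j. j \<in> S \<Longrightarrow>
      \<exists>J. finite J \<and> j \<in> J \<and> card J \<le> r + \<delta> - 1 \<and> pairwise_dist_ge \<delta> (restrict_code J V)"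
    and \<delta>_pos: "1 \<le> \<delta>"
begin

lemma card_restrict_code_support: "card (restrict_code S V) = card V"
  unfolding restrict_code_eq_image
proof (rule card_image, rule inj_onI, rule ext)
  fix v w j assume "v \<in> V" "w \<in> V" "restrict_vec S v = restrict_vec S w"
  then show "v j = w j"
    using agree_outside unfolding restrict_vec_eq_iff by (cases "j \<in> S") blast+
qed

lemma non_separating_pair:
  assumes "card (restrict_code X V) < card V"
  obtains v w where "v \<in> V" "w \<in> V" "v \<noteq> w" "restrict_vec X v = restrict_vec X w"
proof -
  have "\<not> inj_on (restrict_vec X) V"
    using card_image assms unfolding restrict_code_eq_image by fastforce
  then show ?thesis
    using that unfolding inj_on_def by blast
qed

lemma differences_in_support:
  assumes "v \<in> V" "w \<in> V" "restrict_vec X v = restrict_vec X w"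
  shows "{j. v j \<noteq> w j} \<subseteq> S - X"
  using assms agree_outside unfolding restrict_vec_eq_iff by blast

lemma card_add_distance_le:
  assumes "X \<subseteq> S" "card (restrict_code X V) < card V"
  shows "card X + d \<le> card S"
proof -
  obtain v w where vw: "v \<in> V" "w \<in> V" "v \<noteq> w" "restrict_vec X v = restrict_vec X w"
    using non_separating_pair[OF assms(2)] .
  have "d \<le> hamming_dist v w"
    using distance vw(1-3) unfolding pairwise_dist_ge_def by blast
  also have "\<dots> \<le> card (S - X)"
    unfolding hamming_dist_def using differences_in_support[OF vw(1,2,4)] finite_S
    by (intro card_mono) auto
  also have "\<dots> = card S - card X"
    using assms(1) finite_S by (simp add: card_Diff_subset finite_subset)
  finally show ?thesis
    using card_mono[OF finite_S assms(1)] by simp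
qed

lemma local_group_restriction_determined:
  assumes J: "pairwise_dist_ge \<delta> (restrict_code J V)"
    and small: "card (J \<inter> S - Y) < \<delta>"
    and vw: "v \<in> V" "w \<in> V" "restrict_vec Y v = restrict_vec Y w"
  shows "restrict_vec J v = restrict_vec J w"
proof (rule ccontr)
  assume ne: "restrict_vec J v \<noteq> restrict_vec J w"
  have "{j. restrict_vec J v j \<noteq> restrict_vec J w j} \<subseteq> J \<inter> S - Y"
    using differences_in_support[OF vw] by (auto simp: restrict_vec_def)
  then have "hamming_dist (restrict_vec J v) (restrict_vec J w) \<le> card (J \<inter> S - Y)"
    unfolding hamming_dist_def using finite_S by (intro card_mono) auto
  moreover have "\<delta> \<le> hamming_dist (restrict_vec J v) (restrict_vec J w)"
    using J ne vw(1,2) unfolding pairwise_dist_ge_def by (simp add: restrict_code_eq_image)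
  ultimately show False
    using small by simp
qed

text \<open>Two members of \<open>V\<close> that agree on \<open>X\<close> and on all but \<open>\<delta> - 1\<close> coordinates of
  \<open>J \<inter> S - X\<close> differ in fewer than \<open>\<delta>\<close> coordinates of the local group \<open>J\<close>, so they agree
  on all of \<open>J\<close>. Hence \<open>\<delta> - 1\<close> of the new coordinates never create new restrictions.\<close>

lemma card_restrict_code_add_local_group:
  assumes "finite J" and J_dist: "pairwise_dist_ge \<delta> (restrict_code J V)"
  shows "card (restrict_code (X \<union> J \<inter> S) V)
    \<le> CARD('a) ^ (card (J \<inter> S - X) - (\<delta> - 1)) * card (restrict_code X V)"
proof -
  define A where "A = J \<inter> S - X"
  have "finite A"
    using assms(1) by (simp add: A_def)
  obtain E where E: "E \<subseteq> A" "card E = card A - (\<delta> - 1)"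
    using obtain_subset_with_card_n[of "card A - (\<delta> - 1)" A] by auto
  have "finite E"
    using E(1) \<open>finite A\<close> by (rule finite_subset)
  have "J \<inter> S - (X \<union> E) = A - E"
    by (auto simp: A_def)
  then have "card (J \<inter> S - (X \<union> E)) < \<delta>"
    using E \<open>finite E\<close> \<delta>_pos by (simp add: card_Diff_subset)
  then have determined: "restrict_vec (X \<union> J \<inter> S) v = restrict_vec (X \<union> J \<inter> S) w"
    if "v \<in> V" "w \<in> V" "restrict_vec (X \<union> E) v = restrict_vec (X \<union> E) w" for v w
    using local_group_restriction_determined[OF J_dist _ that] that(3)
    unfolding restrict_vec_eq_iff by blast
  have "card (restrict_code (X \<union> J \<inter> S) V) \<le> card (restrict_code (X \<union> E) V)"
    by (rule card_restrict_code_le_if_determined[OF _ finite_V determined])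
      (use E(1) in \<open>auto simp: A_def\<close>)
  also have "\<dots> \<le> CARD('a) ^ card E * card (restrict_code X V)"
    using finite_V \<open>finite E\<close> by (rule card_restrict_code_union)
  finally show ?thesis
    using E(2) by (simp add: A_def)
qed

lemma extend_by_local_group:
  assumes X: "X \<subseteq> S" and non_separating: "card (restrict_code X V) < card V"
  obtains Y where "X \<subseteq> Y" "Y \<subseteq> S"
    "card (restrict_code Y V) \<le> CARD('a) ^ r * card (restrict_code X V)"
    "CARD('a) ^ (\<delta> - 1) * card (restrict_code Y V)
      \<le> CARD('a) ^ (card Y - card X) * card (restrict_code X V)"
proof -
  obtain v w where vw: "v \<in> V" "w \<in> V" "v \<noteq> w" "restrict_vec X v = restrict_vec X w"
    using non_separating_pair[OF non_separating] .
  then obtain j where j: "v j \<noteq> w j"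
    by (auto simp: fun_eq_iff)
  then have "j \<in> S"
    using differences_in_support[OF vw(1,2,4)] by blast
  then obtain J where J: "finite J" "j \<in> J" "card J \<le> r + \<delta> - 1"
    and J_dist: "pairwise_dist_ge \<delta> (restrict_code J V)"
    using local_group[OF \<open>j \<in> S\<close>] by blast
  define A where "A = J \<inter> S - X"
  have "\<delta> \<le> card A"
  proof (rule ccontr)
    assume "\<not> \<delta> \<le> card A"
    then have "restrict_vec J v = restrict_vec J w"
      using local_group_restriction_determined[OF J_dist _ vw(1,2,4)] by (simp add: A_def)
    then show False
      using j J(2) by (simp add: restrict_vec_eq_iff)
  qed
  have bound: "card (restrict_code (X \<union> J \<inter> S) V)
      \<le> CARD('a) ^ (card A - (\<delta> - 1)) * card (restrict_code X V)"
    unfolding A_def using J(1) J_dist by (rule card_restrict_code_add_local_group)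
  have "card A \<le> card J"
    using J(1) by (auto simp: A_def intro: card_mono)
  then have "CARD('a) ^ (card A - (\<delta> - 1)) \<le> CARD('a) ^ r"
    using J(3) card_UNIV_gt_1 by (intro power_increasing) auto
  have "X \<union> J \<inter> S = X \<union> A"
    by (auto simp: A_def)
  moreover have "finite A" "X \<inter> A = {}"
    using J(1) by (auto simp: A_def)
  ultimately have "card (X \<union> J \<inter> S) = card X + card A"
    using finite_subset[OF X finite_S] by (simp add: card_Un_disjoint)
  have "CARD('a) ^ (\<delta> - 1) * CARD('a) ^ (card A - (\<delta> - 1)) = CARD('a) ^ card A"
    using \<open>\<delta> \<le> card A\<close> by (simp flip: power_add)
  show ?thesis
  proof (rule that[of "X \<union> J \<inter> S"])
    show "X \<subseteq> X \<union> J \<inter> S" "X \<union> J \<inter> S \<subseteq> S"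
      using X by auto
    show "card (restrict_code (X \<union> J \<inter> S) V) \<le> CARD('a) ^ r * card (restrict_code X V)"
      using bound \<open>CARD('a) ^ (card A - (\<delta> - 1)) \<le> CARD('a) ^ r\<close> by (meson le_trans mult_le_mono1)
    have "CARD('a) ^ (\<delta> - 1) * card (restrict_code (X \<union> J \<inter> S) V)
        \<le> CARD('a) ^ (\<delta> - 1) * (CARD('a) ^ (card A - (\<delta> - 1)) * card (restrict_code X V))"
      using bound by simp
    also have "\<dots> = CARD('a) ^ card A * card (restrict_code X V)"
      by (simp only: mult.assoc[symmetric]
          \<open>CARD('a) ^ (\<delta> - 1) * CARD('a) ^ (card A - (\<delta> - 1)) = CARD('a) ^ card A\<close>)
    finally show "CARD('a) ^ (\<delta> - 1) * card (restrict_code (X \<union> J \<inter> S) V)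
        \<le> CARD('a) ^ (card (X \<union> J \<inter> S) - card X) * card (restrict_code X V)"
      using \<open>card (X \<union> J \<inter> S) = card X + card A\<close> by simp
  qed
qed

lemma exists_subset_of_local_groups:
  assumes "CARD('a) ^ (L * r) < card V"
  shows "\<exists>X\<subseteq>S. card (restrict_code X V) \<le> CARD('a) ^ (L * r) \<and>
    CARD('a) ^ (L * (\<delta> - 1)) * card (restrict_code X V) \<le> CARD('a) ^ card X"
  using assms
proof (induction L)
  case 0
  have "card (restrict_code {} V) \<le> CARD('a) ^ (0 * r) \<and>
      CARD('a) ^ (0 * (\<delta> - 1)) * card (restrict_code {} V) \<le> CARD('a) ^ card {}"
    by (simp add: card_restrict_code_empty[OF V_nonempty])
  then show ?case
    by blast
next
  case (Suc L)
  have "CARD('a) ^ (L * r) \<le> CARD('a) ^ (Suc L * r)"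
    using card_UNIV_gt_1 by (intro power_increasing) auto
  then obtain X where X: "X \<subseteq> S" "card (restrict_code X V) \<le> CARD('a) ^ (L * r)"
      "CARD('a) ^ (L * (\<delta> - 1)) * card (restrict_code X V) \<le> CARD('a) ^ card X"
    using Suc by auto
  then have "card (restrict_code X V) < card V"
    using Suc.prems \<open>CARD('a) ^ (L * r) \<le> CARD('a) ^ (Suc L * r)\<close> by linarith
  then obtain Y where Y: "X \<subseteq> Y" "Y \<subseteq> S"
      "card (restrict_code Y V) \<le> CARD('a) ^ r * card (restrict_code X V)"
      "CARD('a) ^ (\<delta> - 1) * card (restrict_code Y V)
        \<le> CARD('a) ^ (card Y - card X) * card (restrict_code X V)"
    using extend_by_local_group[OF X(1)] by blast
  have "card (restrict_code Y V) \<le> CARD('a) ^ r * CARD('a) ^ (L * r)"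
    using Y(3) X(2) by (meson le_trans mult_le_mono2)
  then have "card (restrict_code Y V) \<le> CARD('a) ^ (Suc L * r)"
    by (simp add: power_add)
  moreover have "CARD('a) ^ (Suc L * (\<delta> - 1)) * card (restrict_code Y V) \<le> CARD('a) ^ card Y"
  proof -
    have "card X \<le> card Y"
      using Y(1,2) finite_S by (meson card_mono finite_subset)
    have "CARD('a) ^ (Suc L * (\<delta> - 1)) * card (restrict_code Y V)
        = CARD('a) ^ (L * (\<delta> - 1)) * (CARD('a) ^ (\<delta> - 1) * card (restrict_code Y V))"
      by (simp add: power_add ac_simps)
    also have "\<dots>
        \<le> CARD('a) ^ (card Y - card X) * (CARD('a) ^ (L * (\<delta> - 1)) * card (restrict_code X V))"
      using Y(4) by (simp add: ac_simps)
    also have "\<dots> \<le> CARD('a) ^ (card Y - card X) * CARD('a) ^ card X"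
      using X(3) by simp
    also have "\<dots> = CARD('a) ^ card Y"
      using \<open>card X \<le> card Y\<close> by (simp flip: power_add)
    finally show ?thesis .
  qed
  ultimately show ?case
    using Y(2) by blast
qed

lemma greedy_extension_bound:
  assumes "X \<subseteq> S" "card (restrict_code X V) \<le> CARD('a) ^ M"
    and "CARD('a) ^ c * card (restrict_code X V) \<le> CARD('a) ^ card X"
    and "CARD('a) ^ M < card V"
  shows "c + M + d \<le> card S"
  using assms
proof (induction "card (S - X)" arbitrary: X rule: less_induct)
  case less
  have "finite X"
    using less.prems(1) finite_S by (rule finite_subset)
  show ?case
  proof (cases "\<exists>j\<in>S - X. card (restrict_code (insert j X) V) \<le> CARD('a) ^ M")
    case True
    then obtain j where j: "j \<in> S - X" "card (restrict_code (insert j X) V) \<le> CARD('a) ^ M"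
      by blast
    have "card (S - insert j X) < card (S - X)"
      using j(1) finite_S by (intro psubset_card_mono) auto
    moreover have
      "CARD('a) ^ c * card (restrict_code (insert j X) V) \<le> CARD('a) ^ card (insert j X)"
    proof -
      have "CARD('a) ^ c * card (restrict_code (insert j X) V)
          \<le> CARD('a) * (CARD('a) ^ c * card (restrict_code X V))"
        using card_restrict_code_insert[OF finite_V, of j X] by (simp add: ac_simps)
      also have "\<dots> \<le> CARD('a) * CARD('a) ^ card X"
        using less.prems(3) by simp
      finally show ?thesis
        using j(1) \<open>finite X\<close> by simp
    qed
    ultimately show ?thesis
      using less.hyps j less.prems(1,4) by blast
  next
    case False
    have "X \<noteq> S"
      using less.prems(2,4) card_restrict_code_support by auto
    then obtain j where "j \<in> S - X"
      using less.prems(1) by blast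
    then have "CARD('a) ^ M < card (restrict_code (insert j X) V)"
      using False by (meson not_le)
    also have "\<dots> \<le> CARD('a) * card (restrict_code X V)"
      using card_restrict_code_insert[OF finite_V] .
    finally have
      "CARD('a) ^ c * CARD('a) ^ M < CARD('a) ^ c * (CARD('a) * card (restrict_code X V))"
      by simp
    also have "\<dots> \<le> CARD('a) ^ Suc (card X)"
      using less.prems(3) by (simp add: ac_simps)
    finally have "CARD('a) ^ (c + M) < CARD('a) ^ Suc (card X)"
      by (simp add: power_add)
    then have "c + M < Suc (card X)"
      by (rule power_less_imp_less_exp[OF card_UNIV_gt_1])
    moreover have "card X + d \<le> card S"
      using less.prems by (intro card_add_distance_le) auto
    ultimately show ?thesis
      by simp
  qed
qed

text \<open>For \<open>L = \<lceil>m / r\<rceil> - 1\<close> this is the Singleton-type bound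
  \<open>d \<le> |S| - m + 1 - (\<lceil>m / r\<rceil> - 1) (\<delta> - 1)\<close> for codes with \<open>(r, \<delta>)\<close>-locality.\<close>

theorem singleton_bound:
  assumes "CARD('a) ^ m \<le> card V" "L * r < m"
  shows "L * (\<delta> - 1) + m + d \<le> card S + 1"
proof -
  have "1 < CARD('a)"
    by (rule card_UNIV_gt_1)
  then have "CARD('a) ^ (L * r) \<le> CARD('a) ^ (m - 1)" "CARD('a) ^ (m - 1) < CARD('a) ^ m"
    using assms(2) by (simp_all add: power_increasing)
  then obtain X where "X \<subseteq> S" "card (restrict_code X V) \<le> CARD('a) ^ (m - 1)"
      "CARD('a) ^ (L * (\<delta> - 1)) * card (restrict_code X V) \<le> CARD('a) ^ card X"
    using exists_subset_of_local_groups[of L] assms(1) by fastforce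
  then have "L * (\<delta> - 1) + (m - 1) + d \<le> card S"
    using \<open>CARD('a) ^ (m - 1) < CARD('a) ^ m\<close> assms(1) by (intro greedy_extension_bound) auto
  then show ?thesis
    using assms(2) by simp
qed

end

lemma lrc_set_subcode:
  fixes C :: "(nat \<Rightarrow> 'a::{finite,zero_neq_one}) set"
  assumes loc: "has_locality n r \<delta> C" and "1 \<le> \<delta>" and V: "V \<subseteq> C" "finite V" "V \<noteq> {}"
    and S: "S \<subseteq> {1..n}" and agree: "\<And>v w j. v \<in> V \<Longrightarrow> w \<in> V \<Longrightarrow> j \<notin> S \<Longrightarrow> v j = w j"
  shows "lrc_set V S (min_dist C) r \<delta>"
proof
  show "finite V" "V \<noteq> {}" "1 \<le> \<delta>"
    using assms by simp_all
  show "v j = w j" if "v \<in> V" "w \<in> V" "j \<notin> S" for v w j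
    using agree that .
  show "finite S"
    using S by (rule finite_subset) simp
  show "pairwise_dist_ge (min_dist C) V"
    using pairwise_dist_ge_min_dist V(1) by (rule pairwise_dist_ge_subset)
  show "\<exists>J. finite J \<and> j \<in> J \<and> card J \<le> r + \<delta> - 1 \<and> pairwise_dist_ge \<delta> (restrict_code J V)"
    if "j \<in> S" for j
  proof -
    have "j \<in> {1..n}"
      using that S by blast
    then obtain J where J: "J \<subseteq> {1..n}" "j \<in> J" "card J \<le> r + \<delta> - 1"
        "pairwise_dist_ge \<delta> (restrict_code J C)"
      by (rule has_locality_local_group[OF loc])
    moreover have "restrict_code J V \<subseteq> restrict_code J C"
      using V(1) unfolding restrict_code_def by (rule image_mono)
    ultimately show ?thesis
      by (meson finite_atLeastAtMost finite_subset pairwise_dist_ge_subset)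
  qed
qed

lemma floor_deficit_bound:
  fixes k \<rho> r \<delta> :: nat and \<Delta> :: int
  assumes \<delta>: "1 \<le> \<delta>" and "0 \<le> \<Delta>"
    and deficit: "\<And>L. L * r < k - \<rho> \<Longrightarrow> int (L * (\<delta> - 1)) + (int k - int \<rho>) \<le> \<Delta>"
  shows "int k - \<Delta> + (int \<delta> - 1) * \<lfloor>real_of_int \<Delta> / real (r + \<delta> - 1)\<rfloor> \<le> int \<rho>"
proof -
  define D where "D = int r + int \<delta> - 1"
  define L where "L = nat (\<Delta> div D)"
  have "0 \<le> D"
    using \<delta> by (simp add: D_def)
  have "0 \<le> \<Delta> div D"
    using \<open>0 \<le> \<Delta>\<close> \<open>0 \<le> D\<close> by (simp add: div_int_pos_iff)
  then have L: "int L = \<Delta> div D"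
    by (simp add: L_def)
  have "real (r + \<delta> - 1) = real_of_int D"
    using \<delta> by (simp add: D_def of_nat_diff)
  then have floor: "\<lfloor>real_of_int \<Delta> / real (r + \<delta> - 1)\<rfloor> = int L"
    by (simp add: floor_divide_of_int_eq L)
  have "int L * D \<le> \<Delta>"
  proof (cases "D = 0")
    case True
    then show ?thesis
      using \<open>0 \<le> \<Delta>\<close> by simp
  next
    case False
    then have "0 \<le> \<Delta> mod D"
      using \<open>0 \<le> D\<close> by simp
    then show ?thesis
      unfolding L using div_mult_mod_eq[of \<Delta> D] by linarith
  qed
  then have LD: "int L * int r + int L * (int \<delta> - 1) \<le> \<Delta>"
    by (simp add: D_def algebra_simps)
  show ?thesis
  proof (cases "L * r < k - \<rho>")
    case True
    then have "int L * (int \<delta> - 1) + (int k - int \<rho>) \<le> \<Delta>"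
      using deficit[OF True] \<delta> by (simp add: of_nat_diff)
    then show ?thesis
      using floor by (simp add: algebra_simps)
  next
    case False
    then have "k \<le> \<rho> + L * r"
      by arith
    then have "int k - int \<rho> \<le> int L * int r"
      by (simp flip: of_nat_mult of_nat_add)
    then show ?thesis
      using floor LD by (simp add: algebra_simps)
  qed
qed

definition tuple_at :: "nat \<Rightarrow> (nat \<Rightarrow> 'a::zero) \<Rightarrow> nat \<Rightarrow> nat \<Rightarrow> 'a" where
  "tuple_at i c = (\<lambda>i'. if i' = i then c else (\<lambda>_. 0))"

context
  fixes t :: nat and nI kI :: "nat \<Rightarrow> nat" and CI :: "nat \<Rightarrow> (nat \<Rightarrow> 'a::{finite,field}) set"
    and nF kF :: nat and CF :: "(nat \<Rightarrow> 'a) set"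
    and \<phi> :: "(nat \<Rightarrow> nat \<Rightarrow> 'a) \<Rightarrow> (nat \<Rightarrow> 'a)"
    and U R :: "nat \<Rightarrow> nat set" and \<sigma> :: "nat \<Rightarrow> nat \<Rightarrow> nat"
  assumes conv: "gen_convertible_code t nI kI CI nF kF CF \<phi> U \<sigma> R"
begin

lemma initial_code_linear: "i \<in> {1..t} \<Longrightarrow> linear_code (nI i) (kI i) (CI i)"
  and final_code_linear: "linear_code nF kF CF"
  and conversion_bij: "bij_betw \<phi> (code_tuples t CI) CF"
  and symbols_subset: "i \<in> {1..t} \<Longrightarrow> U i \<subseteq> {1..nI i}" "i \<in> {1..t} \<Longrightarrow> R i \<subseteq> {1..nI i}"
  and unchanged_in_final: "i \<in> {1..t} \<Longrightarrow> u \<in> U i \<Longrightarrow> \<sigma> i u \<in> {1..nF}"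
  and unchanged_inj: "inj_on (\<lambda>(i, u). \<sigma> i u) (SIGMA i:{1..t}. U i)"
  and unchanged_symbol: "cs \<in> code_tuples t CI \<Longrightarrow> i \<in> {1..t} \<Longrightarrow> u \<in> U i \<Longrightarrow> \<phi> cs (\<sigma> i u) = cs i u"
  and written_by_read: "cs \<in> code_tuples t CI \<Longrightarrow> ds \<in> code_tuples t CI \<Longrightarrow>
    (\<forall>i\<in>{1..t}. \<forall>j\<in>R i. cs i j = ds i j) \<Longrightarrow> w \<in> written t nF U \<sigma> \<Longrightarrow> \<phi> cs w = \<phi> ds w"
  using conv unfolding gen_convertible_code_def by blast+

lemma tuple_at_in_code_tuples:
  assumes "i \<in> {1..t}" "c \<in> CI i"
  shows "tuple_at i c \<in> code_tuples t CI"
proof -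
  have "(\<lambda>_. 0) \<in> CI i'" if "i' \<in> {1..t}" for i'
    using initial_code_linear[OF that] unfolding linear_code_def by blast
  then show ?thesis
    using assms unfolding code_tuples_def tuple_at_def by auto
qed

lemma conversion_agrees_off_unread_unchanged:
  assumes i: "i \<in> {1..t}" and c: "c \<in> CI i" "c' \<in> CI i"
    and read: "\<forall>u\<in>R i. c u = c' u" and j: "j \<notin> \<sigma> i ` (U i - R i)"
  shows "\<phi> (tuple_at i c) j = \<phi> (tuple_at i c') j"
proof -
  have tuples: "tuple_at i c \<in> code_tuples t CI" "tuple_at i c' \<in> code_tuples t CI"
    using tuple_at_in_code_tuples[OF i] c by blast+
  consider "j \<notin> {1..nF}" | "j \<in> written t nF U \<sigma>"
    | i' u where "i' \<in> {1..t}" "u \<in> U i'" "j = \<sigma> i' u"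
    unfolding written_def
    by (cases "j \<in> (\<lambda>(i, u). \<sigma> i u) ` (SIGMA i:{1..t}. U i)") (auto simp: image_iff)
  then show ?thesis
  proof cases
    case 1
    have "\<phi> (tuple_at i c) \<in> vecs nF" "\<phi> (tuple_at i c') \<in> vecs nF"
      using final_code_linear conversion_bij tuples unfolding bij_betw_def linear_code_def by blast+
    then show ?thesis
      using 1 unfolding vecs_def by simp
  next
    case 2
    have "\<forall>i'\<in>{1..t}. \<forall>u\<in>R i'. tuple_at i c i' u = tuple_at i c' i' u"
      using read by (simp add: tuple_at_def)
    then show ?thesis
      using written_by_read[OF tuples] 2 by blast
  next
    case (3 i' u)
    then have "\<phi> (tuple_at i c) j = tuple_at i c i' u" "\<phi> (tuple_at i c') j = tuple_at i c' i' u"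
      using unchanged_symbol tuples by simp_all
    moreover have "tuple_at i c i' u = tuple_at i c' i' u"
      using 3 j read by (auto simp: tuple_at_def)
    ultimately show ?thesis
      by simp
  qed
qed

lemma card_image_unread_unchanged:
  assumes "i \<in> {1..t}"
  shows "card (\<sigma> i ` (U i - R i)) = card (U i - R i)"
proof -
  have "inj_on (\<sigma> i) (U i)"
  proof (rule inj_onI)
    fix u u' assume "u \<in> U i" "u' \<in> U i" "\<sigma> i u = \<sigma> i u'"
    then have "(i, u) = (i, u')"
      using inj_onD[OF unchanged_inj, of "(i, u)" "(i, u')"] assms by simp
    then show "u = u'"
      by simp
  qed
  then show ?thesis
    by (simp add: card_image inj_on_subset)
qed

lemma card_unread_unchanged_add_read_le:
  assumes "i \<in> {1..t}"
  shows "card (U i - R i) + card (R i) \<le> nI i"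
proof -
  have sub: "U i \<subseteq> {1..nI i}" "R i \<subseteq> {1..nI i}"
    using symbols_subset[OF assms] .
  then have "card (U i - R i) + card (R i) = card ((U i - R i) \<union> R i)"
    by (intro card_Un_disjoint[symmetric]) (auto intro: finite_subset)
  also have "\<dots> \<le> card {1..nI i}"
    using sub by (intro card_mono) auto
  finally show ?thesis
    by simp
qed

lemma card_conversion_tuple_at:
  assumes "i \<in> {1..t}" "F \<subseteq> CI i"
  shows "card (\<phi> ` tuple_at i ` F) = card F"
proof -
  have "inj (tuple_at i)"
  proof (rule injI)
    fix c c' assume "tuple_at i c = tuple_at i c'"
    then have "tuple_at i c i = tuple_at i c' i"
      by simp
    then show "c = c'"
      by (simp add: tuple_at_def)
  qed
  moreover have "inj_on \<phi> (tuple_at i ` F)"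
    using conversion_bij tuple_at_in_code_tuples assms unfolding bij_betw_def
    by (blast intro: inj_on_subset)
  ultimately show ?thesis
    by (simp add: card_image inj_on_subset[OF \<open>inj (tuple_at i)\<close> subset_UNIV])
qed

lemma unread_unchanged_lrc_set:
  assumes loc: "has_locality nF r \<delta> CF" and \<delta>: "1 \<le> \<delta>" and i: "i \<in> {1..t}"
  obtains V :: "(nat \<Rightarrow> 'a) set"
  where "lrc_set V (\<sigma> i ` (U i - R i)) (min_dist CF) r \<delta>"
    "CARD('a) ^ kI i \<le> CARD('a) ^ card (R i) * card V"
proof -
  have "card (CI i) = CARD('a) ^ kI i" "CI i \<noteq> {}"
    using initial_code_linear[OF i] unfolding linear_code_def by blast+
  then have "finite (CI i)"
    by (intro card_ge_0_finite) simp
  have "finite (R i)"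
    using symbols_subset[OF i] by (auto intro: finite_subset)
  obtain F p where F: "F \<subseteq> CI i" "\<forall>c\<in>F. restrict_vec (R i) c = p"
      "card (CI i) \<le> CARD('a) ^ card (R i) * card F"
    using large_fiber_of_restriction[OF \<open>finite (CI i)\<close> \<open>CI i \<noteq> {}\<close> \<open>finite (R i)\<close>] .
  define V where "V = \<phi> ` tuple_at i ` F"
  have "card V = card F"
    unfolding V_def using i F(1) by (rule card_conversion_tuple_at)
  then have "0 < card V"
    using F(3) \<open>card (CI i) = CARD('a) ^ kI i\<close> by (cases "card F = 0") auto
  have "lrc_set V (\<sigma> i ` (U i - R i)) (min_dist CF) r \<delta>"
  proof (rule lrc_set_subcode[OF loc \<delta>])
    show "V \<subseteq> CF"
      using conversion_bij tuple_at_in_code_tuples[OF i] F(1) unfolding V_def bij_betw_def by blast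
    show "finite V" "V \<noteq> {}"
      using \<open>0 < card V\<close> card_gt_0_iff by blast+
    show "\<sigma> i ` (U i - R i) \<subseteq> {1..nF}"
      using unchanged_in_final[OF i] by blast
    show "v j = w j" if vw: "v \<in> V" "w \<in> V" and j: "j \<notin> \<sigma> i ` (U i - R i)" for v w j
    proof -
      obtain c c' where "c \<in> F" "c' \<in> F" "v = \<phi> (tuple_at i c)" "w = \<phi> (tuple_at i c')"
        using vw unfolding V_def by blast
      moreover have "c \<in> CI i" "c' \<in> CI i"
        using F(1) \<open>c \<in> F\<close> \<open>c' \<in> F\<close> by blast+
      moreover have "\<forall>u\<in>R i. c u = c' u"
        using F(2) \<open>c \<in> F\<close> \<open>c' \<in> F\<close> unfolding restrict_vec_eq_iff[symmetric] by simp
      ultimately show ?thesis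
        using conversion_agrees_off_unread_unchanged[OF i _ _ _ j] by blast
    qed
  qed
  then show ?thesis
    using that F(3) \<open>card (CI i) = CARD('a) ^ kI i\<close> \<open>card V = card F\<close> by simp
qed

lemma read_deficit_bound:
  assumes "has_locality nF r \<delta> CF" "1 \<le> \<delta>" "i \<in> {1..t}"
    and L: "L * r < kI i - card (R i)"
  shows "L * (\<delta> - 1) + (kI i - card (R i)) + min_dist CF \<le> card (U i - R i) + 1"
proof -
  obtain V :: "(nat \<Rightarrow> 'a) set"
    where V: "lrc_set V (\<sigma> i ` (U i - R i)) (min_dist CF) r \<delta>"
      "CARD('a) ^ kI i \<le> CARD('a) ^ card (R i) * card V"
    using unread_unchanged_lrc_set[OF assms(1-3)] .
  have "CARD('a) ^ card (R i) * CARD('a) ^ (kI i - card (R i)) = CARD('a) ^ kI i"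
    using L by (simp flip: power_add)
  with V(2) have "CARD('a) ^ card (R i) * CARD('a) ^ (kI i - card (R i))
      \<le> CARD('a) ^ card (R i) * card V"
    by simp
  then have "CARD('a) ^ (kI i - card (R i)) \<le> card V"
    by simp
  from lrc_set.singleton_bound[OF V(1) this L] show ?thesis
    using card_image_unread_unchanged[OF assms(3)] by simp
qed


lemma dimension_le_read_or_deficit:
  assumes "has_locality nF r \<delta> CF" "1 \<le> \<delta>" "i \<in> {1..t}"
  shows "kI i \<le> card (R i) \<or>
    int (kI i) - int (card (R i)) \<le> int (card (U i - R i)) - int (min_dist CF) + 1"
  using read_deficit_bound[OF assms, of 0] by (cases "kI i \<le> card (R i)") auto

lemma read_symbols_lower_bound:
  assumes "has_locality nF r \<delta> CF" "1 \<le> \<delta>" "i \<in> {1..t}"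
  defines "\<Delta> \<equiv> int (card (U i - R i)) - int (min_dist CF) + 1"
  shows "(if \<Delta> \<le> 0 then int (kI i)
    else int (kI i) - \<Delta> + (int \<delta> - 1) * \<lfloor>real_of_int \<Delta> / real (r + \<delta> - 1)\<rfloor>) \<le> int (card (R i))"
proof (cases "\<Delta> \<le> 0")
  case True
  then show ?thesis
    using dimension_le_read_or_deficit[OF assms(1-3)] unfolding \<Delta>_def by auto
next
  case False
  have "int (kI i) - \<Delta> + (int \<delta> - 1) * \<lfloor>real_of_int \<Delta> / real (r + \<delta> - 1)\<rfloor> \<le> int (card (R i))"
  proof (rule floor_deficit_bound)
    show "1 \<le> \<delta>" "0 \<le> \<Delta>"
      using assms(2) False by simp_all
    show "int (L * (\<delta> - 1)) + (int (kI i) - int (card (R i))) \<le> \<Delta>"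
      if "L * r < kI i - card (R i)" for L
      using read_deficit_bound[OF assms(1-3) that] unfolding \<Delta>_def by linarith
  qed
  then show ?thesis
    using False by simp
qed

lemma read_symbols_ge_dimension:
  assumes "has_locality nF r \<delta> CF" "1 \<le> \<delta>" "i \<in> {1..t}"
    and "int (nI i) - int (kI i) + 1 < int (min_dist CF)"
  shows "int (card (U i - R i)) - int (min_dist CF) + 1 \<le> 0 \<and> kI i \<le> card (R i)"
  using dimension_le_read_or_deficit[OF assms(1-3)] card_unread_unchanged_add_read_le[OF assms(3)]
    assms(4) by linarith

end

theorem mainTheorem3:
  fixes t :: nat and nI kI :: "nat \<Rightarrow> nat" and CI :: "nat \<Rightarrow> (nat \<Rightarrow> 'a::{finite,field}) set"
    and nF kF :: nat and CF :: "(nat \<Rightarrow> 'a) set"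
    and \<phi> :: "(nat \<Rightarrow> nat \<Rightarrow> 'a) \<Rightarrow> (nat \<Rightarrow> 'a)"
    and U R :: "nat \<Rightarrow> nat set" and \<sigma> :: "nat \<Rightarrow> nat \<Rightarrow> nat"
    and r \<delta> dF :: nat and \<Delta> :: "nat \<Rightarrow> int"
  assumes conv: "gen_convertible_code t nI kI CI nF kF CF \<phi> U \<sigma> R"
    and r: "r \<ge> 1" and \<delta>: "\<delta> \<ge> 2"
    and loc: "has_locality nF r \<delta> CF"
    and dF: "dF = min_dist CF"
    and \<Delta>_def: "\<And>i. \<Delta> i = int (card (U i - R i)) - int dF + 1"
  shows "(\<forall>i\<in>{1..t}. int (card (R i)) \<ge>
            (if \<Delta> i \<le> 0 then int (kI i)
             else int (kI i) - \<Delta> i + (int \<delta> - 1) * \<lfloor>real_of_int (\<Delta> i) / real (r + \<delta> - 1)\<rfloor>))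
       \<and> (\<forall>i\<in>{1..t}. int dF > int (nI i) - int (kI i) + 1 \<longrightarrow>
            \<Delta> i \<le> 0 \<and> card (R i) \<ge> kI i)"
proof -
  have "1 \<le> \<delta>"
    using \<delta> by simp
  then show ?thesis
    unfolding \<Delta>_def dF
    using read_symbols_lower_bound[OF conv loc] read_symbols_ge_dimension[OF conv loc] by auto
qed

end
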